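(* Let $\{b_n\}_{n\ge1}$ be a sequence of non-zero complex numbers with finite exponent of convergence and genus $p\ge1$, and let $a>0$ be real with $a+b_n\neq0$ for all $n$. Then for every $z\in\mathbb C$, $$\sum_{n=1}^\infty\sum_{j=1}^p\frac{(-1)^j}{j}a^j\Big(\frac{z^j}{(a+b_n)^j}-\frac{(1+z)^j}{b_n^j}+\frac1{b_n^j}\Big)=\sum_{k=1}^pE^p_k(a)z^k,$$ where $E^p_k(a)=\sum_{n=1}^\infty\Big(\frac{(-1)^k}{k}\frac{a^k}{(a+b_n)^k}-\sum_{j=k}^p\frac{(-1)^j}{j}\binom jk\frac{a^j}{b_n^j}\Big)$, all series being convergent.
   Context: For a sequence $\{b_n\}$ of non-zero complex numbers with only accumulation point $\infty$ (ordered by modulus), the exponent of convergence is $\limsup_n\log n/\log|b_n|$ and the genus $p$ is its integer part, i.e. the least integer $p\ge0$ with $\sum_n|b_n|^{-p-1}<\infty$. *)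

theory Defs
  imports "HOL-Analysis.Analysis"
begin

text \<open>Convention: the paper's sequence b_1, b_2, ... is represented by
  b :: nat => complex with b n standing for b_(n+1).\<close>

definition admissible_seq :: "(nat \<Rightarrow> complex) \<Rightarrow> bool" where
  "admissible_seq b \<longleftrightarrow> (\<forall>n. b n \<noteq> 0) \<and> mono (\<lambda>n. norm (b n))
     \<and> filterlim (\<lambda>n. norm (b n)) at_top sequentially"

definition exponent_of_convergence :: "(nat \<Rightarrow> complex) \<Rightarrow> ereal" where
  "exponent_of_convergence b =
     limsup (\<lambda>n. ereal (ln (real (Suc n)) / ln (norm (b n))))"

definition genus_of :: "(nat \<Rightarrow> complex) \<Rightarrow> nat \<Rightarrow> bool" where
  "genus_of b p \<longleftrightarrow> (LEAST q::nat. summable (\<lambda>n. norm (b n) powr (- real (q + 1)))) = p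
       \<and> (\<exists>q::nat. summable (\<lambda>n. norm (b n) powr (- real (q + 1))))"

definition E_term :: "(nat \<Rightarrow> complex) \<Rightarrow> nat \<Rightarrow> nat \<Rightarrow> real \<Rightarrow> nat \<Rightarrow> complex" where
  "E_term b p k a n =
     (-1) ^ k / of_nat k * (of_real a) ^ k / (of_real a + b n) ^ k
     - (\<Sum>j=k..p. (-1) ^ j / of_nat j * of_nat (j choose k) * (of_real a) ^ j / (b n) ^ j)"

definition E_coef :: "(nat \<Rightarrow> complex) \<Rightarrow> nat \<Rightarrow> nat \<Rightarrow> real \<Rightarrow> complex" where
  "E_coef b p k a = (\<Sum>n. E_term b p k a n)"

end

theory Submission
  imports Defs
begin

text \<open>For \<open>|w| < 1\<close> the binomial series of \<open>(1 + w) powr -k\<close> gives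
  \<open>\<Sum>j\<ge>k. (-1)^j / j * (j choose k) * w^j = (-1)^k / k * (w / (1 + w))^k\<close>.
  With \<open>w = a / b\<^sub>n\<close> the \<open>n\<close>-th summand of \<open>E^p_k(a)\<close> is therefore the tail of this
  series beyond \<open>j = p\<close>, which is \<open>O(|b\<^sub>n|^(-p-1))\<close>; the definition of the genus makes
  these bounds summable. The identity itself holds termwise: expanding \<open>(1 + z)^j\<close>
  binomially and exchanging the finite sums over \<open>j\<close> and \<open>k\<close> turns the \<open>n\<close>-th summand
  of the left-hand side into \<open>\<Sum>k=1..p. E_term b p k a n * z^k\<close>.\<close>

lemma of_nat_times_binomial_pred:
  assumes "1 \<le> k"
  shows "(of_nat (k + m) * of_nat ((k + m - 1) choose m) :: 'a::semiring_1)
    = of_nat k * of_nat ((k + m) choose k)"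
proof -
  have "(k + m - 1) choose m = (k + m - 1) choose (k - 1)"
    using assms binomial_symmetric[of m "k + m - 1"] by simp
  then have "(k + m) * ((k + m - 1) choose m) = k * ((k + m) choose k)"
    using assms by (simp add: times_binomial_minus1_eq)
  then show ?thesis by (metis of_nat_mult)
qed

lemma binomial_coeff_series_sums:
  fixes w :: complex
  assumes "norm w < 1" "1 \<le> k"
  shows "(\<lambda>m. (-1) ^ (k + m) / of_nat (k + m) * of_nat ((k + m) choose k) * w ^ (k + m))
           sums ((-1) ^ k / of_nat k * (w / (1 + w)) ^ k)"
proof -
  have "1 + w \<noteq> 0"
    using assms(1) by (metis add.inverse_unique norm_minus_cancel norm_one order_less_irrefl)
  then have "(1 + w) powr (- of_nat k) = inverse ((1 + w) ^ k)"
    using powr_of_int[of "1 + w" "- int k"] assms(2) by simp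
  then have "(\<lambda>m. ((- of_nat k) gchoose m) * w ^ m) sums inverse ((1 + w) ^ k)"
    using gen_binomial_complex[OF assms(1)] by metis
  then have "(\<lambda>m. (-1) ^ k / of_nat k * w ^ k * (((- of_nat k) gchoose m) * w ^ m)) sums
      ((-1) ^ k / of_nat k * w ^ k * inverse ((1 + w) ^ k))"
    by (rule sums_mult)
  moreover have "(-1) ^ k / of_nat k * w ^ k * (((- of_nat k) gchoose m) * w ^ m)
      = (-1) ^ (k + m) / of_nat (k + m) * of_nat ((k + m) choose k) * w ^ (k + m)" for m
  proof -
    have "((- of_nat k) gchoose m :: complex) = (-1) ^ m * of_nat ((k + m - 1) choose m)"
      using assms(2) by (simp add: gbinomial_minus binomial_gbinomial of_nat_diff)
    moreover have "(of_nat (k + m) :: complex) \<noteq> 0"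
      using assms(2) by (metis add_is_0 not_one_le_zero of_nat_eq_0_iff)
    ultimately show ?thesis
      using of_nat_times_binomial_pred[OF assms(2), of m, where 'a = complex] assms(2)
      by (simp add: field_simps power_add)
  qed
  ultimately show ?thesis
    by (simp add: power_divide field_simps)
qed

lemma norm_binomial_coeff_remainder_le:
  fixes w :: complex
  assumes "norm w \<le> 1/4" "1 \<le> k" "k \<le> p"
  shows "norm ((-1) ^ k / of_nat k * (w / (1 + w)) ^ k
     - (\<Sum>j=k..p. (-1) ^ j / of_nat j * of_nat (j choose k) * w ^ j)) \<le> 2 * (2 * norm w) ^ (p + 1)"
proof -
  define f where "f m = (-1) ^ (k + m) / of_nat (k + m) * of_nat ((k + m) choose k) * w ^ (k + m)" for m
  define N where "N = p + 1 - k"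
  define r where "r = 2 * norm w"
  have r: "0 \<le> r" "r \<le> 1/2" using assms(1) by (auto simp: r_def)
  have partial_sum: "(\<Sum>i<N. f i) = (\<Sum>j=k..p. (-1) ^ j / of_nat j * of_nat (j choose k) * w ^ j)"
    unfolding f_def N_def
    by (rule sum.reindex_bij_witness[of _ "\<lambda>j. j - k" "\<lambda>i. k + i"]) (use assms in auto)
  have "f sums ((-1) ^ k / of_nat k * (w / (1 + w)) ^ k)"
    unfolding f_def using binomial_coeff_series_sums assms by simp
  then have tail: "(\<lambda>i. f (i + N)) sums ((-1) ^ k / of_nat k * (w / (1 + w)) ^ k - (\<Sum>i<N. f i))"
    by (simp add: sums_iff_shift)
  have tail_le: "norm (f (i + N)) \<le> r ^ (p + 1) * r ^ i" for i
  proof -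
    have index: "k + (i + N) = p + 1 + i" using assms unfolding N_def by simp
    have "norm (f (i + N)) = real ((p + 1 + i) choose k) / real (p + 1 + i) * norm w ^ (p + 1 + i)"
      unfolding f_def index norm_mult norm_divide norm_power norm_of_nat by simp
    also have "\<dots> \<le> real ((p + 1 + i) choose k) * norm w ^ (p + 1 + i)"
      by (intro mult_right_mono) (auto simp: field_simps)
    also have "\<dots> \<le> 2 ^ (p + 1 + i) * norm w ^ (p + 1 + i)"
      using binomial_le_pow2[of "p + 1 + i" k] of_nat_mono
      by (intro mult_right_mono) fastforce+
    also have "\<dots> = r ^ (p + 1) * r ^ i" by (simp add: r_def power_mult_distrib power_add)
    finally show ?thesis .
  qed
  have geometric: "(\<lambda>i. r ^ (p + 1) * r ^ i) sums (r ^ (p + 1) * (1 / (1 - r)))"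
    using sums_mult[OF geometric_sums, of r "r ^ (p + 1)"] r by simp
  have "norm ((-1) ^ k / of_nat k * (w / (1 + w)) ^ k - (\<Sum>i<N. f i)) = norm (\<Sum>i. f (i + N))"
    using tail by (simp add: sums_iff)
  also have "\<dots> \<le> (\<Sum>i. r ^ (p + 1) * r ^ i)"
    using geometric by (intro norm_suminf_le[OF tail_le]) (rule sums_summable)
  also have "\<dots> = r ^ (p + 1) * (1 / (1 - r))"
    using geometric by (simp add: sums_iff)
  also have "\<dots> \<le> r ^ (p + 1) * 2"
    using r by (intro mult_left_mono) (auto simp: field_simps)
  finally show ?thesis unfolding partial_sum r_def by simp
qed

lemma sum_triangle_swap:
  fixes g :: "nat \<Rightarrow> nat \<Rightarrow> 'a::comm_monoid_add"
  shows "(\<Sum>j=1..p. \<Sum>k=1..j. g j k) = (\<Sum>k=1..p. \<Sum>j=k..p. g j k)"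
  by (induction p) (simp_all add: sum.distrib)

lemma one_plus_power_eq:
  fixes z :: "'a::comm_ring_1"
  shows "(1 + z) ^ j = 1 + (\<Sum>k=1..j. of_nat (j choose k) * z ^ k)"
proof -
  have "(1 + z) ^ j = (\<Sum>k\<le>j. of_nat (j choose k) * z ^ k)"
    using binomial_ring[of z 1 j] by (simp add: add.commute)
  also have "{..j} = insert 0 {1..j}" by auto
  finally show ?thesis by simp
qed

lemma summand_eq_polynomial:
  fixes A B z :: complex
  shows "(\<Sum>j=1..p. (-1) ^ j / of_nat j * A ^ j *
          (z ^ j / (A + B) ^ j - (1 + z) ^ j / B ^ j + 1 / B ^ j))
    = (\<Sum>k=1..p. ((-1) ^ k / of_nat k * A ^ k / (A + B) ^ k
     - (\<Sum>j=k..p. (-1) ^ j / of_nat j * of_nat (j choose k) * A ^ j / B ^ j)) * z ^ k)"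
proof -
  have "(\<Sum>j=1..p. (-1) ^ j / of_nat j * A ^ j *
          (z ^ j / (A + B) ^ j - (1 + z) ^ j / B ^ j + 1 / B ^ j))
      = (\<Sum>j=1..p. (-1) ^ j / of_nat j * A ^ j / (A + B) ^ j * z ^ j)
        - (\<Sum>j=1..p. \<Sum>k=1..j. (-1) ^ j / of_nat j * of_nat (j choose k) * A ^ j / B ^ j * z ^ k)"
    unfolding one_plus_power_eq sum_subtractf[symmetric]
    by (rule sum.cong[OF refl])
      (simp add: sum_distrib_left sum_divide_distrib diff_divide_distrib add_divide_distrib algebra_simps)
  also have "\<dots> = (\<Sum>k=1..p. (-1) ^ k / of_nat k * A ^ k / (A + B) ^ k * z ^ k)
        - (\<Sum>k=1..p. (\<Sum>j=k..p. (-1) ^ j / of_nat j * of_nat (j choose k) * A ^ j / B ^ j) * z ^ k)"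
    unfolding sum_triangle_swap sum_distrib_right ..
  finally show ?thesis
    by (simp add: sum_subtractf[symmetric] algebra_simps)
qed

lemma summable_powr_genus:
  assumes "genus_of b p"
  shows "summable (\<lambda>n. norm (b n) powr (- real (p + 1)))"
  using assms LeastI_ex[of "\<lambda>q. summable (\<lambda>n. norm (b n) powr (- real (q + 1)))"]
  unfolding genus_of_def by auto

lemma norm_E_term_le:
  assumes "b n \<noteq> 0" "4 * \<bar>a\<bar> \<le> norm (b n)" "1 \<le> k" "k \<le> p"
  shows "norm (E_term b p k a n) \<le> 2 * (2 * \<bar>a\<bar>) ^ (p + 1) * norm (b n) powr (- real (p + 1))"
proof -
  define w where "w = of_real a / b n"
  have norm_w: "norm w = \<bar>a\<bar> / norm (b n)" by (simp add: w_def norm_divide)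
  have "norm w \<le> 1/4" unfolding norm_w using assms(1,2) by (simp add: field_simps)
  moreover have "E_term b p k a n = (-1) ^ k / of_nat k * (w / (1 + w)) ^ k
      - (\<Sum>j=k..p. (-1) ^ j / of_nat j * of_nat (j choose k) * w ^ j)"
  proof -
    have "w / (1 + w) = of_real a / (of_real a + b n)"
      using assms(1) by (simp add: w_def field_simps)
    then show ?thesis
      unfolding E_term_def w_def by (simp only: power_divide times_divide_eq_right)
  qed
  ultimately have "norm (E_term b p k a n) \<le> 2 * (2 * norm w) ^ (p + 1)"
    using norm_binomial_coeff_remainder_le assms(3,4) by simp
  also have "\<dots> = 2 * (2 * \<bar>a\<bar>) ^ (p + 1) * norm (b n) powr (- real (p + 1))"
  proof -
    have "norm (b n) powr (- real (p + 1)) = 1 / norm (b n) ^ (p + 1)"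
      using assms(1) powr_minus_divide[of "norm (b n)" "real (p + 1)"] powr_realpow[of "norm (b n)" "p + 1"]
      by simp
    then show ?thesis
      unfolding norm_w by (simp add: power_divide power_mult_distrib)
  qed
  finally show ?thesis .
qed

lemma summable_E_term:
  assumes "admissible_seq b" "genus_of b p" "1 \<le> k" "k \<le> p"
  shows "summable (\<lambda>n. E_term b p k a n)"
proof (rule summable_comparison_test_ev)
  show "summable (\<lambda>n. 2 * (2 * \<bar>a\<bar>) ^ (p + 1) * norm (b n) powr (- real (p + 1)))"
    using summable_powr_genus[OF assms(2)] by (rule summable_mult)
  have "\<forall>n. b n \<noteq> 0" and "\<forall>\<^sub>F n in sequentially. 4 * \<bar>a\<bar> \<le> norm (b n)"
    using assms(1) unfolding admissible_seq_def filterlim_at_top by auto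
  then show "\<forall>\<^sub>F n in sequentially.
      norm (E_term b p k a n) \<le> 2 * (2 * \<bar>a\<bar>) ^ (p + 1) * norm (b n) powr (- real (p + 1))"
    using assms(3,4) norm_E_term_le by (auto elim!: eventually_mono)
qed

theorem mainTheorem7:
  fixes b :: "nat \<Rightarrow> complex" and p :: nat and a :: real and z :: complex
  assumes "admissible_seq b"
    and "exponent_of_convergence b < \<infinity>"
    and "genus_of b p" and "p \<ge> 1"
    and "a > 0" and "\<forall>n. of_real a + b n \<noteq> 0"
  shows "(\<forall>k\<in>{1..p}. summable (\<lambda>n. E_term b p k a n))
    \<and> (\<lambda>n. \<Sum>j=1..p. (-1) ^ j / of_nat j * (of_real a) ^ j *
          (z ^ j / (of_real a + b n) ^ j - (1 + z) ^ j / (b n) ^ j + 1 / (b n) ^ j))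
       sums (\<Sum>k=1..p. E_coef b p k a * z ^ k)"
proof -
  have summable: "\<forall>k\<in>{1..p}. summable (\<lambda>n. E_term b p k a n)"
    using summable_E_term[OF assms(1,3)] by simp
  then have "(\<lambda>n. \<Sum>k=1..p. E_term b p k a n * z ^ k) sums (\<Sum>k=1..p. E_coef b p k a * z ^ k)"
    unfolding E_coef_def by (intro sums_sum sums_mult2) (simp add: summable_sums)
  moreover have "(\<lambda>n. \<Sum>j=1..p. (-1) ^ j / of_nat j * (of_real a) ^ j *
          (z ^ j / (of_real a + b n) ^ j - (1 + z) ^ j / (b n) ^ j + 1 / (b n) ^ j))
      = (\<lambda>n. \<Sum>k=1..p. E_term b p k a n * z ^ k)"
    unfolding summand_eq_polynomial E_term_def ..
  ultimately show ?thesis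
    using summable by simp
qed

end
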